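(* Work in the tabular setting with the definitions in the context, and assume the empirical dynamics is deterministic: there is a map $M:\mathcal S\times\mathcal A\to\mathcal S$ such that $M(s'\mid s,a)=\mathbb I[M(s,a)=s']$ for all $s,a,s'$. Define, for every $s$ appearing in $\mathcal D$, $$\pi^*(a\mid s)=\frac{1}{Z(s)}\exp\big(\alpha V(M(s,a))\big)\,\beta(a\mid s).$$ Then: (i) $\pi^*(\cdot\mid s)$ is a probability distribution on $\mathcal A$ for every $s\in\mathcal D$; (ii) both $\bar R(\pi)$ and $\bar R_1(\pi)$ attain their global maximum over all policies at $\pi=\pi^*$; (iii) $\operatorname{supp}(\pi^*(\cdot\mid s))\subseteq\operatorname{supp}(\beta(\cdot\mid s))$ for every $s\in\mathcal D$; and (iv) $N^*(\cdot\mid s)=M(\cdot\mid s,\pi^*(\cdot\mid s))$ for every $s\in\mathcal D$.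
   Context: Finite state space $\mathcal S$ and finite action space $\mathcal A$. $\mathcal D$ is a finite dataset of transitions $(s,a,s')$ (rewards irrelevant here); "$s\in\mathcal D$" means $s$ occurs as the first component of some transition. $\beta(a\mid s)$ is the empirical behavior policy (fraction of transitions from $s$ with action $a$). $M(s'\mid s,a)$ is the empirical dynamics model: the fraction of transitions from $(s,a)$ ending in $s'$ if $(s,a)$ occurs in $\mathcal D$, and $0$ otherwise. $N(s'\mid s)=\sum_a\beta(a\mid s)M(s'\mid s,a)$ is the empirical state-transition distribution. $V:\mathcal S\to\mathbb R$ is a fixed real function and $\alpha\ge 0$ a constant. $Z(s)=\sum_{s'}\exp(\alpha V(s'))N(s'\mid s)$ and $N^*(s'\mid s)=\frac{1}{Z(s)}\exp(\alpha V(s'))N(s'\mid s)$. A policy $\pi$ assigns a distribution $\pi(\cdot\mid s)$ on $\mathcal A$ to each state; $M(s'\mid s,\pi(\cdot\mid s)):=\sum_a\pi(a\mid s)M(s'\mid s,a)$. $\mathbb E_{(s,s')\sim\mathcal D}$ denotes the average over the transitions of $\mathcal D$ (equivalently $s$ drawn from the empirical state distribution and $s'\sim N(\cdot\mid s)$). The objectives (with $\log 0=-\infty$) are $$\bar R(\pi)=\mathbb E_{(s,s')\sim\mathcal D}\Big[\tfrac{\exp(\alpha V(s'))}{Z(s)}\log M(s'\mid s,\pi(\cdot\mid s))\Big],\qquad \bar R_1(\pi)=\mathbb E_{(s,s')\sim\mathcal D}\Big[\tfrac{\exp(\alpha V(s'))}{\exp(\alpha V(s))}\log M(s'\mid s,\pi(\cdot\mid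 s))\Big].$$ *)

theory Defs
  imports "HOL-Analysis.Analysis" "HOL-Library.Extended_Real"
begin

text \<open>Tabular setting. The dataset is a finite list of transitions (s, a, s');
  duplicates are allowed, expectations are averages over the list entries.\<close>

definition states_D :: "('s \<times> 'a \<times> 's) list \<Rightarrow> 's set" where
  "states_D D = (\<lambda>(s,a,s'). s) ` set D"

definition pairs_D :: "('s \<times> 'a \<times> 's) list \<Rightarrow> ('s \<times> 'a) set" where
  "pairs_D D = (\<lambda>(s,a,s'). (s,a)) ` set D"

definition cnt_s :: "('s \<times> 'a \<times> 's) list \<Rightarrow> 's \<Rightarrow> nat" where
  "cnt_s D s = length (filter (\<lambda>(x,y,z). x = s) D)"

definition cnt_sa :: "('s \<times> 'a \<times> 's) list \<Rightarrow> 's \<Rightarrow> 'a \<Rightarrow> nat" where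
  "cnt_sa D s a = length (filter (\<lambda>(x,y,z). x = s \<and> y = a) D)"

definition cnt_sas :: "('s \<times> 'a \<times> 's) list \<Rightarrow> 's \<Rightarrow> 'a \<Rightarrow> 's \<Rightarrow> nat" where
  "cnt_sas D s a s' = length (filter (\<lambda>(x,y,z). x = s \<and> y = a \<and> z = s') D)"

definition beta :: "('s \<times> 'a \<times> 's) list \<Rightarrow> 's \<Rightarrow> 'a \<Rightarrow> real" where
  "beta D s a = real (cnt_sa D s a) / real (cnt_s D s)"

definition Memp :: "('s \<times> 'a \<times> 's) list \<Rightarrow> 's \<Rightarrow> 'a \<Rightarrow> 's \<Rightarrow> real" where
  "Memp D s a s' = (if (s,a) \<in> pairs_D D
      then real (cnt_sas D s a s') / real (cnt_sa D s a) else 0)"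

definition Nemp :: "('s \<times> 'a::finite \<times> 's) list \<Rightarrow> 's \<Rightarrow> 's \<Rightarrow> real" where
  "Nemp D s s' = (\<Sum>a\<in>UNIV. beta D s a * Memp D s a s')"

definition Zf :: "('s::finite \<times> 'a::finite \<times> 's) list \<Rightarrow> ('s \<Rightarrow> real) \<Rightarrow> real \<Rightarrow> 's \<Rightarrow> real" where
  "Zf D V \<alpha> s = (\<Sum>s'\<in>UNIV. exp (\<alpha> * V s') * Nemp D s s')"

definition Nstar :: "('s::finite \<times> 'a::finite \<times> 's) list \<Rightarrow> ('s \<Rightarrow> real) \<Rightarrow> real \<Rightarrow> 's \<Rightarrow> 's \<Rightarrow> real" where
  "Nstar D V \<alpha> s s' = exp (\<alpha> * V s') * Nemp D s s' / Zf D V \<alpha> s"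

definition Mpol :: "('s \<times> 'a::finite \<times> 's) list \<Rightarrow> 's \<Rightarrow> ('a \<Rightarrow> real) \<Rightarrow> 's \<Rightarrow> real" where
  "Mpol D s p s' = (\<Sum>a\<in>UNIV. p a * Memp D s a s')"

definition is_policy :: "('s \<Rightarrow> 'a::finite \<Rightarrow> real) \<Rightarrow> bool" where
  "is_policy \<pi> \<longleftrightarrow> (\<forall>s. (\<forall>a. 0 \<le> \<pi> s a) \<and> (\<Sum>a\<in>UNIV. \<pi> s a) = 1)"

definition elog :: "real \<Rightarrow> ereal" where
  "elog x = (if x = 0 then - \<infinity> else ereal (ln x))"

definition ED :: "('s \<times> 'a \<times> 's) list \<Rightarrow> ('s \<times> 'a \<times> 's \<Rightarrow> ereal) \<Rightarrow> ereal" where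
  "ED D f = sum_list (map f D) / ereal (real (length D))"

definition Rbar :: "('s::finite \<times> 'a::finite \<times> 's) list \<Rightarrow> ('s \<Rightarrow> real) \<Rightarrow> real
                    \<Rightarrow> ('s \<Rightarrow> 'a \<Rightarrow> real) \<Rightarrow> ereal" where
  "Rbar D V \<alpha> \<pi> = ED D (\<lambda>(s,a,s').
      ereal (exp (\<alpha> * V s') / Zf D V \<alpha> s) * elog (Mpol D s (\<pi> s) s'))"

definition Rbar1 :: "('s::finite \<times> 'a::finite \<times> 's) list \<Rightarrow> ('s \<Rightarrow> real) \<Rightarrow> real
                    \<Rightarrow> ('s \<Rightarrow> 'a \<Rightarrow> real) \<Rightarrow> ereal" where
  "Rbar1 D V \<alpha> \<pi> = ED D (\<lambda>(s,a,s').
      ereal (exp (\<alpha> * V s') / exp (\<alpha> * V s)) * elog (Mpol D s (\<pi> s) s'))"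

end

theory Submission
  imports Defs
begin

text \<open>With deterministic dynamics, \<open>M(\<cdot>|s,\<pi>)\<close> is the \<open>\<pi>\<close>-average of the point masses at
  \<open>m(s,a)\<close>. Hence \<open>Z(s) = \<Sum>\<^sub>a \<beta>(a|s) exp(\<alpha> V(m(s,a)))\<close>, so \<open>\<pi>\<^sup>*\<close> is normalised, and
  \<open>M(\<cdot>|s,\<pi>\<^sup>*)\<close> is the exponential reweighting \<open>N\<^sup>*(\<cdot>|s)\<close> of \<open>N(\<cdot>|s)\<close>.
  Grouping the transitions of the dataset by \<open>(s,s')\<close>, either objective becomes
  \<open>\<Sum>\<^sub>s \<Sum>\<^sub>s\<^sub>' c\<^sub>s(s') log q(s'|s)\<close> with weights \<open>c\<^sub>s(s')\<close> proportional to
  \<open>count(s,s') exp(\<alpha> V(s'))\<close>. By Gibbs' inequality each inner sum is maximised over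
  sub-probability vectors \<open>q(\<cdot>|s)\<close> by the normalised weights, which are again \<open>N\<^sup>*(\<cdot>|s)\<close>.\<close>

lemma sum_length_filter_fibres:
  fixes f :: "'a \<Rightarrow> 'b::finite"
  shows "(\<Sum>y\<in>UNIV. length (filter (\<lambda>x. P x \<and> f x = y) xs)) = length (filter P xs)"
proof (induction xs)
  case (Cons x xs)
  have "length (filter (\<lambda>x. P x \<and> f x = y) (x # xs))
      = (if y = f x then of_bool (P x) else 0) + length (filter (\<lambda>x. P x \<and> f x = y) xs)" for y
    by auto
  then show ?case using Cons by (simp add: sum.distrib)
qed simp

lemma sum_list_map_fibres:
  fixes f :: "'a \<Rightarrow> 'b::finite" and h :: "'b \<Rightarrow> 'c::comm_semiring_1"
  shows "sum_list (map (\<lambda>x. h (f x)) xs) = (\<Sum>y\<in>UNIV. of_nat (length (filter (\<lambda>x. f x = y) xs)) * h y)"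
proof (induction xs)
  case (Cons x xs)
  have "of_nat (length (filter (\<lambda>x. f x = y) (x # xs))) * h y
      = (if y = f x then h (f x) else 0) + of_nat (length (filter (\<lambda>x. f x = y) xs)) * h y" for y
    by (auto simp: distrib_right)
  then show ?case using Cons by (simp add: sum.distrib)
qed simp

lemma sum_list_map_ereal_eq_minf:
  fixes f :: "'a \<Rightarrow> ereal"
  assumes "\<And>y. y \<in> set xs \<Longrightarrow> f y \<noteq> \<infinity>" "x \<in> set xs" "f x = -\<infinity>"
  shows "sum_list (map f xs) = -\<infinity>"
proof -
  have "sum_list (map f xs) \<noteq> \<infinity> \<and> (x \<in> set xs \<longrightarrow> sum_list (map f xs) = -\<infinity>)"
    using assms(1,3) by (induction xs) auto
  with assms(2) show ?thesis by blast
qed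

lemma gibbs_inequality:
  fixes c q :: "'a \<Rightarrow> real"
  assumes A: "finite A"
    and c_nonneg: "\<And>x. x \<in> A \<Longrightarrow> 0 \<le> c x"
    and q_nonneg: "\<And>x. x \<in> A \<Longrightarrow> 0 \<le> q x"
    and q_sum: "sum q A \<le> 1"
    and q_pos: "\<And>x. x \<in> A \<Longrightarrow> 0 < c x \<Longrightarrow> 0 < q x"
  shows "(\<Sum>x\<in>A. c x * ln (q x)) \<le> (\<Sum>x\<in>A. c x * ln (c x / sum c A))"
proof -
  define C where "C = sum c A"
  have C_nonneg: "0 \<le> C" unfolding C_def using c_nonneg by (rule sum_nonneg)
  have pointwise: "c x * ln (q x) \<le> c x * ln (c x / C) + (C * q x - c x)" if x: "x \<in> A" for x
  proof (cases "c x = 0")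
    case True
    then show ?thesis using C_nonneg q_nonneg[OF x] by simp
  next
    case False
    then have cx: "0 < c x" using c_nonneg[OF x] by simp
    have "c x \<le> C" unfolding C_def using A x c_nonneg by (intro member_le_sum) auto
    then have C: "0 < C" using cx by simp
    have qx: "0 < q x" using q_pos[OF x cx] .
    have "ln (q x) - ln (c x / C) = ln (q x / (c x / C))" using cx C qx by (simp add: ln_div ln_mult)
    also have "\<dots> \<le> q x / (c x / C) - 1" using cx C qx by (intro ln_le_minus_one) simp
    finally have "c x * (ln (q x) - ln (c x / C)) \<le> c x * (q x / (c x / C) - 1)"
      using cx by (intro mult_left_mono) auto
    also have "\<dots> = C * q x - c x" using cx by (simp add: field_simps)
    finally show ?thesis by (simp add: algebra_simps)
  qed
  have "(\<Sum>x\<in>A. c x * ln (q x)) \<le> (\<Sum>x\<in>A. c x * ln (c x / C)) + (C * sum q A - C)"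
    using sum_mono[OF pointwise]
    by (simp add: sum.distrib sum_subtractf sum_distrib_left C_def)
  also have "C * sum q A \<le> C" using mult_left_le[OF q_sum C_nonneg] .
  finally show ?thesis by (simp add: C_def)
qed

definition cnt_ss :: "('s \<times> 'a \<times> 's) list \<Rightarrow> 's \<Rightarrow> 's \<Rightarrow> nat" where
  "cnt_ss D s s' = length (filter (\<lambda>(x,y,z). x = s \<and> z = s') D)"

lemma sum_cnt_sas_targets:
  fixes D :: "('s::finite \<times> 'a \<times> 's) list"
  shows "(\<Sum>s'\<in>UNIV. cnt_sas D s a s') = cnt_sa D s a"
  using sum_length_filter_fibres[of "\<lambda>(x,y,z). x = s \<and> y = a" "\<lambda>(x,y,z). z" D]
  by (simp add: cnt_sas_def cnt_sa_def case_prod_unfold conj_assoc)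

lemma sum_cnt_sas_actions:
  fixes D :: "('s \<times> 'a::finite \<times> 's) list"
  shows "(\<Sum>a\<in>UNIV. cnt_sas D s a s') = cnt_ss D s s'"
  using sum_length_filter_fibres[of "\<lambda>(x,y,z). x = s \<and> z = s'" "\<lambda>(x,y,z). y" D]
  by (simp add: cnt_sas_def cnt_ss_def case_prod_unfold conj_ac)

lemma sum_cnt_ss:
  fixes D :: "('s::finite \<times> 'a \<times> 's) list"
  shows "(\<Sum>s'\<in>UNIV. cnt_ss D s s') = cnt_s D s"
  using sum_length_filter_fibres[of "\<lambda>(x,y,z). x = s" "\<lambda>(x,y,z). z" D]
  by (simp add: cnt_ss_def cnt_s_def case_prod_unfold)

lemma sum_list_transitions:
  fixes D :: "('s::finite \<times> 'a \<times> 's) list" and g :: "'s \<Rightarrow> 's \<Rightarrow> real"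
  shows "sum_list (map (\<lambda>(s,a,s'). g s s') D) = (\<Sum>s\<in>UNIV. \<Sum>s'\<in>UNIV. real (cnt_ss D s s') * g s s')"
  using sum_list_map_fibres[of "case_prod g" "\<lambda>(x,y,z). (x,z)" D]
  by (simp add: cnt_ss_def case_prod_unfold prod_eq_iff sum.cartesian_product flip: UNIV_Times_UNIV)

lemma cnt_ss_pos_iff: "0 < cnt_ss D s s' \<longleftrightarrow> (\<exists>a. (s,a,s') \<in> set D)"
  by (force simp: cnt_ss_def filter_empty_conv)

lemma cnt_s_pos_iff: "0 < cnt_s D s \<longleftrightarrow> s \<in> states_D D"
  by (force simp: cnt_s_def states_D_def filter_empty_conv)

lemma cnt_sa_pos_iff: "0 < cnt_sa D s a \<longleftrightarrow> (s,a) \<in> pairs_D D"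
  by (force simp: cnt_sa_def pairs_D_def filter_empty_conv)

context
  fixes D :: "('s::finite \<times> 'a::finite \<times> 's) list"
begin

lemma beta_mult_Memp: "beta D s a * Memp D s a s' = real (cnt_sas D s a s') / real (cnt_s D s)"
proof (cases "(s,a) \<in> pairs_D D")
  case True
  then show ?thesis using cnt_sa_pos_iff[of D s a] by (simp add: beta_def Memp_def)
next
  case False
  then have "cnt_sa D s a = 0" using cnt_sa_pos_iff[of D s a] by simp
  then have "cnt_sas D s a s' = 0" using sum_cnt_sas_targets[of D s a] by simp
  then show ?thesis using False by (simp add: Memp_def)
qed

lemma beta_nonneg: "0 \<le> beta D s a"
  by (simp add: beta_def)

lemma Nemp_eq_cnt: "Nemp D s s' = real (cnt_ss D s s') / real (cnt_s D s)"
  unfolding Nemp_def beta_mult_Memp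
  by (simp add: sum_divide_distrib[symmetric] flip: of_nat_sum sum_cnt_sas_actions)

lemma Zf_eq_cnt: "Zf D V \<alpha> s = (\<Sum>s'\<in>UNIV. exp (\<alpha> * V s') * real (cnt_ss D s s')) / real (cnt_s D s)"
  unfolding Zf_def Nemp_eq_cnt by (simp add: sum_divide_distrib)

lemma Zf_pos:
  assumes "s \<in> states_D D"
  shows "0 < Zf D V \<alpha> s"
proof -
  obtain a s' where "(s,a,s') \<in> set D" using assms by (auto simp: states_D_def)
  then have "0 < cnt_ss D s s'" using cnt_ss_pos_iff by fast
  then have "0 < exp (\<alpha> * V s') * real (cnt_ss D s s')" by simp
  also have "\<dots> \<le> (\<Sum>s'\<in>UNIV. exp (\<alpha> * V s') * real (cnt_ss D s s'))"
    by (rule member_le_sum) auto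
  finally show ?thesis using assms cnt_s_pos_iff[of D s] by (simp add: Zf_eq_cnt)
qed

lemma Nstar_pos:
  assumes "(s,a,s') \<in> set D"
  shows "0 < Nstar D V \<alpha> s s'"
proof -
  have s: "s \<in> states_D D" using assms by (force simp: states_D_def)
  have "0 < cnt_ss D s s'" "0 < cnt_s D s"
    using assms s cnt_ss_pos_iff cnt_s_pos_iff by fast+
  then have "0 < Nemp D s s'" by (simp add: Nemp_eq_cnt)
  then show ?thesis using Zf_pos[OF s, of V \<alpha>] by (simp add: Nstar_def)
qed

lemma Nstar_eq_normalized:
  "Nstar D V \<alpha> s s' = exp (\<alpha> * V s') * real (cnt_ss D s s')
                        / (\<Sum>s''\<in>UNIV. exp (\<alpha> * V s'') * real (cnt_ss D s s''))"
proof (cases "cnt_s D s = 0")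
  case True
  \<comment> \<open>\<open>s\<close> never occurs in the data: both sides are \<open>0\<close> through division by zero.\<close>
  then show ?thesis using sum_cnt_ss[of D s] by (simp add: Nstar_def Nemp_eq_cnt)
next
  case False
  have cancel: "x * (c / n) / (S / n) = x * c / S" if "n \<noteq> 0" for x c n S :: real
    using that by simp
  then show ?thesis using False by (simp add: Nstar_def Nemp_eq_cnt Zf_eq_cnt)
qed

lemma sum_Memp_le_one: "(\<Sum>s'\<in>UNIV. Memp D s a s') \<le> 1"
proof (cases "(s,a) \<in> pairs_D D")
  case True
  have "(\<Sum>s'\<in>UNIV. Memp D s a s') = real (\<Sum>s'\<in>UNIV. cnt_sas D s a s') / real (cnt_sa D s a)"
    using True by (simp add: Memp_def sum_divide_distrib[symmetric])
  also have "\<dots> = 1"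
    using True cnt_sa_pos_iff[of D s a] by (simp add: sum_cnt_sas_targets)
  finally show ?thesis by simp
qed (simp add: Memp_def)

lemma Mpol_nonneg: "(\<And>a. 0 \<le> p a) \<Longrightarrow> 0 \<le> Mpol D s p s'"
  unfolding Mpol_def Memp_def by (auto intro!: sum_nonneg)

lemma sum_Mpol_le_one:
  assumes "\<And>a. 0 \<le> p a" "(\<Sum>a\<in>UNIV. p a) = 1"
  shows "(\<Sum>s'\<in>UNIV. Mpol D s p s') \<le> 1"
proof -
  have "(\<Sum>s'\<in>UNIV. Mpol D s p s') = (\<Sum>a\<in>UNIV. \<Sum>s'\<in>UNIV. p a * Memp D s a s')"
    unfolding Mpol_def by (rule sum.swap)
  also have "\<dots> = (\<Sum>a\<in>UNIV. p a * (\<Sum>s'\<in>UNIV. Memp D s a s'))"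
    by (simp add: sum_distrib_left)
  also have "\<dots> \<le> (\<Sum>a\<in>UNIV. p a)"
    using assms(1) sum_Memp_le_one by (intro sum_mono) (simp add: mult_left_le)
  finally show ?thesis using assms(2) by simp
qed

lemma beta_mult_Memp_deterministic:
  assumes det: "\<forall>s a s'. (s, a) \<in> pairs_D D \<longrightarrow> Memp D s a s' = (if m s a = s' then 1 else 0)"
  shows "beta D s a * Memp D s a s' = (if m s a = s' then beta D s a else 0)"
proof (cases "(s,a) \<in> pairs_D D")
  case False
  then have "cnt_sa D s a = 0" using cnt_sa_pos_iff[of D s a] by simp
  then show ?thesis by (simp add: beta_def Memp_def)
qed (simp add: det)

lemma Zf_deterministic:
  assumes det: "\<forall>s a s'. (s, a) \<in> pairs_D D \<longrightarrow> Memp D s a s' = (if m s a = s' then 1 else 0)"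
  shows "Zf D V \<alpha> s = (\<Sum>a\<in>UNIV. beta D s a * exp (\<alpha> * V (m s a)))"
proof -
  have "Zf D V \<alpha> s = (\<Sum>s'\<in>UNIV. \<Sum>a\<in>UNIV. exp (\<alpha> * V s') * (beta D s a * Memp D s a s'))"
    unfolding Zf_def Nemp_def by (simp add: sum_distrib_left)
  also have "\<dots> = (\<Sum>a\<in>UNIV. \<Sum>s'\<in>UNIV. exp (\<alpha> * V s') * (beta D s a * Memp D s a s'))"
    by (rule sum.swap)
  also have "\<dots> = (\<Sum>a\<in>UNIV. beta D s a * exp (\<alpha> * V (m s a)))"
    by (simp add: beta_mult_Memp_deterministic[OF det] if_distrib sum.delta mult.commute
             cong: if_cong)
  finally show ?thesis .
qed

lemma Mpol_deterministic_eq_Nstar: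
  assumes det: "\<forall>s a s'. (s, a) \<in> pairs_D D \<longrightarrow> Memp D s a s' = (if m s a = s' then 1 else 0)"
    and pistar: "\<And>a. p a = exp (\<alpha> * V (m s a)) * beta D s a / Zf D V \<alpha> s"
  shows "Mpol D s p s' = Nstar D V \<alpha> s s'"
proof -
  have pointwise: "p a * Memp D s a s' = exp (\<alpha> * V s') * (beta D s a * Memp D s a s') / Zf D V \<alpha> s"
    for a
  proof -
    have "p a * Memp D s a s' = exp (\<alpha> * V (m s a)) * (beta D s a * Memp D s a s') / Zf D V \<alpha> s"
      by (simp add: pistar)
    also have "\<dots> = exp (\<alpha> * V s') * (beta D s a * Memp D s a s') / Zf D V \<alpha> s"
      by (simp add: beta_mult_Memp_deterministic[OF det])
    finally show ?thesis .
  qed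
  show ?thesis
    unfolding Mpol_def pointwise
    by (simp add: Nstar_def Nemp_def sum_divide_distrib[symmetric] sum_distrib_left)
qed

end

lemma sum_list_weighted_elog:
  assumes "\<And>s a s'. (s,a,s') \<in> set D \<Longrightarrow> 0 < q s s'"
  shows "sum_list (map (\<lambda>(s,a,s'). ereal (w s s') * elog (q s s')) D)
       = ereal (sum_list (map (\<lambda>(s,a,s'). w s s' * ln (q s s')) D))"
proof -
  have "map (\<lambda>(s,a,s'). ereal (w s s') * elog (q s s')) D
      = map (\<lambda>t. ereal ((\<lambda>(s,a,s'). w s s' * ln (q s s')) t)) D"
    using assms by (intro map_cong refl) (fastforce simp: elog_def)
  then show ?thesis by (simp only: sum_list_ereal)
qed

lemma sum_list_weighted_elog_eq_minf:
  assumes "\<And>s a s'. (s,a,s') \<in> set D \<Longrightarrow> 0 < w s s'" "(s,a,s') \<in> set D" "q s s' = 0"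
  shows "sum_list (map (\<lambda>(s,a,s'). ereal (w s s') * elog (q s s')) D) = -\<infinity>"
proof (rule sum_list_map_ereal_eq_minf[where x = "(s,a,s')"])
  fix t assume "t \<in> set D"
  moreover obtain s a s' where t: "t = (s,a,s')" by (cases t)
  ultimately have "0 < w s s'" using assms(1) by simp
  then show "(\<lambda>(s,a,s'). ereal (w s s') * elog (q s s')) t \<noteq> \<infinity>"
    by (simp add: t elog_def)
qed (use assms(1)[OF assms(2)] assms(2,3) in \<open>simp_all add: elog_def\<close>)

lemma ED_mono: "sum_list (map f D) \<le> sum_list (map g D) \<Longrightarrow> ED D f \<le> ED D g"
  unfolding ED_def by (cases "D = []") (auto intro!: ereal_divide_right_mono)

lemma sum_list_weighted_elog_le_Nstar:
  fixes D :: "('s::finite \<times> 'a::finite \<times> 's) list" and k :: "'s \<Rightarrow> real"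
    and q :: "'s \<Rightarrow> 's \<Rightarrow> real"
  assumes k_pos: "\<And>s. s \<in> states_D D \<Longrightarrow> 0 < k s"
    and q_nonneg: "\<And>s s'. 0 \<le> q s s'"
    and q_sum: "\<And>s. (\<Sum>s'\<in>UNIV. q s s') \<le> 1"
  shows "sum_list (map (\<lambda>(s,a,s'). ereal (exp (\<alpha> * V s') / k s) * elog (q s s')) D)
       \<le> sum_list (map (\<lambda>(s,a,s'). ereal (exp (\<alpha> * V s') / k s) * elog (Nstar D V \<alpha> s s')) D)"
proof -
  let ?w = "\<lambda>s s'. exp (\<alpha> * V s') / k s"
  define c where "c s s' = real (cnt_ss D s s') * ?w s s'" for s s'
  have in_D_iff: "0 < cnt_ss D s s' \<longleftrightarrow> (\<exists>a. (s,a,s') \<in> set D)" for s s'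
    by (rule cnt_ss_pos_iff)
  have in_states: "(s,a,s') \<in> set D \<Longrightarrow> s \<in> states_D D" for s a s'
    by (force simp: states_D_def)
  have w_pos: "(s,a,s') \<in> set D \<Longrightarrow> 0 < ?w s s'" for s a s'
    using k_pos[OF in_states] by simp
  have c_pos_iff: "0 < c s s' \<longleftrightarrow> 0 < cnt_ss D s s'" for s s'
  proof
    assume "0 < c s s'"
    then show "0 < cnt_ss D s s'" by (rule contrapos_pp) (simp add: c_def)
  next
    assume cnt: "0 < cnt_ss D s s'"
    then obtain a where "(s,a,s') \<in> set D" using in_D_iff by blast
    then show "0 < c s s'" unfolding c_def using cnt w_pos by (intro mult_pos_pos) auto
  qed
  have c_nonneg: "0 \<le> c s s'" for s s'
    using c_pos_iff[of s s'] by (cases "cnt_ss D s s' = 0") (auto simp: c_def)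
  have c_normalized: "c s s' * ln (c s s' / sum (c s) UNIV) = c s s' * ln (Nstar D V \<alpha> s s')"
    for s s'
  proof (cases "cnt_ss D s s' = 0")
    case False
    then obtain a where "(s,a,s') \<in> set D" using in_D_iff by blast
    then have "0 < k s" using k_pos in_states by blast
    then have "c s s' / sum (c s) UNIV = Nstar D V \<alpha> s s'"
      by (simp add: c_def Nstar_eq_normalized sum_divide_distrib[symmetric] mult.commute)
    then show ?thesis by simp
  qed (simp add: c_def)
  have Nstar_side: "sum_list (map (\<lambda>(s,a,s'). ereal (?w s s') * elog (Nstar D V \<alpha> s s')) D)
      = ereal (\<Sum>s\<in>UNIV. \<Sum>s'\<in>UNIV. c s s' * ln (Nstar D V \<alpha> s s'))"
    by (simp add: sum_list_weighted_elog Nstar_pos sum_list_transitions c_def mult.assoc)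
  show ?thesis
  proof (cases "\<exists>s a s'. (s,a,s') \<in> set D \<and> q s s' = 0")
    case True
    then obtain s a s' where "(s,a,s') \<in> set D" "q s s' = 0" by blast
    then show ?thesis using w_pos by (simp add: sum_list_weighted_elog_eq_minf)
  next
    case False
    then have q_pos: "(s,a,s') \<in> set D \<Longrightarrow> 0 < q s s'" for s a s'
      using q_nonneg[of s s'] by force
    have "(\<Sum>s\<in>UNIV. \<Sum>s'\<in>UNIV. c s s' * ln (q s s'))
        \<le> (\<Sum>s\<in>UNIV. \<Sum>s'\<in>UNIV. c s s' * ln (c s s' / sum (c s) UNIV))"
      by (intro sum_mono[OF gibbs_inequality])
        (auto simp: c_nonneg q_nonneg q_sum c_pos_iff in_D_iff q_pos)
    also have "\<dots> = (\<Sum>s\<in>UNIV. \<Sum>s'\<in>UNIV. c s s' * ln (Nstar D V \<alpha> s s'))"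
      by (simp only: c_normalized)
    finally show ?thesis
      by (simp add: Nstar_side sum_list_weighted_elog q_pos sum_list_transitions c_def mult.assoc)
  qed
qed

theorem proposition1:
  fixes D :: "('s::finite \<times> 'a::finite \<times> 's) list"
    and V :: "'s \<Rightarrow> real" and \<alpha> :: real
    and m :: "'s \<Rightarrow> 'a \<Rightarrow> 's"
    and \<pi>star :: "'s \<Rightarrow> 'a \<Rightarrow> real"
  assumes alpha: "\<alpha> \<ge> 0"
    and det: "\<forall>s a s'. (s, a) \<in> pairs_D D \<longrightarrow> Memp D s a s' = (if m s a = s' then 1 else 0)"
    and pistar_def: "\<forall>s a. \<pi>star s a = exp (\<alpha> * V (m s a)) * beta D s a / Zf D V \<alpha> s"
  shows "(\<forall>s\<in>states_D D. (\<forall>a. 0 \<le> \<pi>star s a) \<and> (\<Sum>a\<in>UNIV. \<pi>star s a) = 1)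
       \<and> (\<forall>\<pi>. is_policy \<pi> \<longrightarrow> Rbar D V \<alpha> \<pi> \<le> Rbar D V \<alpha> \<pi>star \<and> Rbar1 D V \<alpha> \<pi> \<le> Rbar1 D V \<alpha> \<pi>star)
       \<and> (\<forall>s\<in>states_D D. \<forall>a. \<pi>star s a \<noteq> 0 \<longrightarrow> beta D s a \<noteq> 0)
       \<and> (\<forall>s\<in>states_D D. \<forall>s'. Nstar D V \<alpha> s s' = Mpol D s (\<pi>star s) s')"
proof -
  have Mpol_pistar: "Mpol D s (\<pi>star s) s' = Nstar D V \<alpha> s s'" for s s'
    using pistar_def by (intro Mpol_deterministic_eq_Nstar[OF det]) simp
  have normalised: "(\<forall>a. 0 \<le> \<pi>star s a) \<and> (\<Sum>a\<in>UNIV. \<pi>star s a) = 1" if s: "s \<in> states_D D" for s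
  proof -
    have "(\<Sum>a\<in>UNIV. \<pi>star s a) = (\<Sum>a\<in>UNIV. beta D s a * exp (\<alpha> * V (m s a))) / Zf D V \<alpha> s"
      using pistar_def by (simp add: sum_divide_distrib mult.commute)
    also have "\<dots> = 1"
      using Zf_pos[OF s, of V \<alpha>] by (simp flip: Zf_deterministic[OF det])
    finally show ?thesis
      using Zf_pos[OF s, of V \<alpha>] pistar_def
      by (auto intro!: divide_nonneg_pos mult_nonneg_nonneg beta_nonneg)
  qed
  have optimal: "Rbar D V \<alpha> \<pi> \<le> Rbar D V \<alpha> \<pi>star \<and> Rbar1 D V \<alpha> \<pi> \<le> Rbar1 D V \<alpha> \<pi>star"
    if "is_policy \<pi>" for \<pi>
  proof -
    have q_nonneg: "0 \<le> Mpol D s (\<pi> s) s'" and q_sum: "(\<Sum>s'\<in>UNIV. Mpol D s (\<pi> s) s') \<le> 1"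
      for s s' using that by (simp_all add: is_policy_def Mpol_nonneg sum_Mpol_le_one)
    show ?thesis
      unfolding Rbar_def Rbar1_def Mpol_pistar
      by (intro conjI ED_mono sum_list_weighted_elog_le_Nstar Zf_pos q_nonneg q_sum) simp_all
  qed
  show ?thesis
    using normalised optimal Mpol_pistar pistar_def by simp
qed

end
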